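(* Let $p_0=\mathcal{N}(\mu_0,\sigma^2)$ and $p_1=\mathcal{N}(\mu_1,\sigma^2)$ on the metric space $(\mathbb{R},|\cdot|)$ with $\mu_0<\mu_1$. Consider binary classification with labels $0,1$ equally likely, given $y=i$ the input $x\sim p_i$, classifiers indexed by closed sets $A\subseteq\mathbb{R}$ (output $1$ on $A$, $0$ on $A^c$), $0$-$1$ loss, and adversarial risk of $A$ given by $\mathbb{E}_{(x,y)}\big[\sup_{|x'-x|\le\epsilon}\mathbf{1}\{\mathbf{1}\{x'\in A\}\neq y\}\big]$; the optimal robust risk is the infimum of this over closed $A$. Then: (1) If $\epsilon\ge\frac{|\mu_0-\mu_1|}{2}$, the optimal robust risk is $1/2$, and a constant classifier achieves it. (2) If $\epsilon<\frac{|\mu_0-\mu_1|}{2}$, the set $A=\big[\frac{\mu_0+\mu_1}{2},+\infty\big)$ gives an optimal robust classifier, and the optimal robust risk equals $Q\!\left(\frac{\frac{\mu_1-\mu_0}{2}-\epsilon}{\sigma}\right)$.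
   Context: $Q(x)=1-\Phi(x)$, where $\Phi$ is the cdf of the standard normal distribution. *)

theory Defs
  imports "HOL-Probability.Probability"
begin

definition gauss :: "real \<Rightarrow> real \<Rightarrow> real measure" where
  "gauss mu sd = density lborel (normal_density mu sd)"

definition Phi :: "real \<Rightarrow> real" where
  "Phi x = measure (gauss 0 1) {..x}"

definition Qfun :: "real \<Rightarrow> real" where
  "Qfun x = 1 - Phi x"

definition loss01 :: "real set \<Rightarrow> real \<Rightarrow> nat \<Rightarrow> real" where
  "loss01 A x' y = (if (if x' \<in> A then (1::nat) else 0) \<noteq> y then 1 else 0)"

definition adv_risk :: "real \<Rightarrow> real \<Rightarrow> real \<Rightarrow> real \<Rightarrow> real set \<Rightarrow> real" where
  "adv_risk mu0 mu1 sd eps A =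
     (1/2) * (\<integral>x. (SUP x'\<in>cball x eps. loss01 A x' 0) \<partial>gauss mu0 sd)
   + (1/2) * (\<integral>x. (SUP x'\<in>cball x eps. loss01 A x' 1) \<partial>gauss mu1 sd)"

definition opt_robust_risk :: "real \<Rightarrow> real \<Rightarrow> real \<Rightarrow> real \<Rightarrow> real" where
  "opt_robust_risk mu0 mu1 sd eps = (INF A\<in>{A. closed A}. adv_risk mu0 mu1 sd eps A)"

end

theory Submission
  imports Defs
begin

(*
  If x lies outside the eps-thickening D of A, then x + s/2 lies outside A, so x + s lies in
  the eps-thickening E of the complement of A, for 0 <= s <= 2 eps. After translating by s,
  the complements of D and E are therefore disjoint events for N(mu0, sd^2) and
  N(mu1 - s, sd^2), and their masses add up to at most those of the two half-lines split at
  the midpoint of the means, where the larger of the two densities switches. As the risk of A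
  is 1 - (P0(-D) + P1(-E)) / 2, it is at least 1 - Phi((mu1 - mu0 - s) / (2 sd)). Taking
  s = min (2 eps) (mu1 - mu0) gives 1/2, attained by A = {}, resp.
  Q(((mu1 - mu0)/2 - eps) / sd), attained by the half-line from the midpoint.
*)

lemma prob_space_gauss: "sd > 0 \<Longrightarrow> prob_space (gauss mu sd)"
  unfolding gauss_def by (rule prob_space_normal_density)

lemma sets_gauss [simp, measurable_cong]: "sets (gauss mu sd) = sets borel"
  by (simp add: gauss_def)

lemma space_gauss [simp]: "space (gauss mu sd) = UNIV"
  by (simp add: gauss_def)

lemma distr_gauss_affine:
  assumes "sd > 0" "a \<noteq> 0"
  shows "distr (gauss mu sd) lborel (\<lambda>x. b + a * x) = gauss (b + a * mu) (\<bar>a\<bar> * sd)"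
proof -
  interpret prob_space "gauss mu sd"
    using assms(1) by (rule prob_space_gauss)
  have "distributed (gauss mu sd) lborel (\<lambda>x. x) (normal_density mu sd)"
    by (simp add: distributed_def distr_id2 gauss_def)
  from normal_density_affine[OF this assms]
  show ?thesis
    by (simp add: distributed_def gauss_def)
qed

lemma measure_gauss_affine_vimage:
  assumes "sd > 0" "a \<noteq> 0" "S \<in> sets borel"
  shows "measure (gauss (b + a * mu) (\<bar>a\<bar> * sd)) S =
    measure (gauss mu sd) ((\<lambda>x. b + a * x) -` S)"
  using assms by (simp flip: distr_gauss_affine add: measure_distr)

lemma measure_gauss_singleton [simp]: "measure (gauss mu sd) {a} = 0"
proof -
  have "AE x in lborel. ennreal (normal_density mu sd x) * indicator {a} x = 0"
    using AE_lborel_singleton[of a] by eventually_elim simp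
  then show ?thesis
    by (simp add: gauss_def measure_def emeasure_density nn_integral_0_iff_AE)
qed

lemma measure_gauss_atMost:
  assumes "sd > 0"
  shows "measure (gauss mu sd) {..x} = Phi ((x - mu) / sd)"
proof -
  have "(\<lambda>z. mu + sd * z) -` {..x} = {..(x - mu) / sd}"
    using assms by (auto simp: field_simps)
  then show ?thesis
    using measure_gauss_affine_vimage[where sd=1 and a=sd and b=mu and mu=0 and S="{..x}"] assms
    by (simp add: Phi_def)
qed

lemma measure_gauss_lessThan:
  assumes "sd > 0"
  shows "measure (gauss mu sd) {..<x} = Phi ((x - mu) / sd)"
proof -
  interpret prob_space "gauss mu sd"
    using assms(1) by (rule prob_space_gauss)
  have "measure (gauss mu sd) {..x} = measure (gauss mu sd) {..<x} + measure (gauss mu sd) {x}"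
    by (subst finite_measure_Union[symmetric]) (auto intro: arg_cong[where f="measure _"])
  then show ?thesis
    using measure_gauss_atMost[OF assms] by simp
qed

lemma measure_gauss_Compl:
  assumes "sd > 0" "S \<in> sets borel"
  shows "measure (gauss mu sd) (- S) = 1 - measure (gauss mu sd) S"
  using prob_space.prob_compl[OF prob_space_gauss[OF assms(1)], of S mu] assms(2)
  by (simp add: Compl_eq_Diff_UNIV)

lemma measure_gauss_atLeast:
  assumes "sd > 0"
  shows "measure (gauss mu sd) {x..} = 1 - Phi ((x - mu) / sd)"
  using measure_gauss_Compl[OF assms, of "{..<x}" mu] measure_gauss_lessThan[OF assms]
  by simp

lemma Phi_minus: "Phi (- t) = 1 - Phi t"
proof -
  have "Phi (- t) = measure (gauss 0 1) ((\<lambda>x. 0 + -1 * x) -` {..-t})"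
    using measure_gauss_affine_vimage[where sd=1 and a="-1" and b=0 and mu=0 and S="{..-t}"]
    by (simp add: Phi_def)
  also have "(\<lambda>x. 0 + -1 * x) -` {..-t} = {t..}"
    by auto
  finally show ?thesis
    using measure_gauss_atLeast[where sd=1 and mu=0 and x=t] by simp
qed

lemma Phi_0: "Phi 0 = 1/2"
  using Phi_minus[of 0] by simp

lemma measure_gauss_eq_integral:
  assumes "sd > 0" "S \<in> sets borel"
  shows "measure (gauss mu sd) S = (\<integral>x. normal_density mu sd x * indicator S x \<partial>lborel)"
proof -
  have "measure (gauss mu sd) S = (\<integral>x. indicator S x \<partial>gauss mu sd)"
    by simp
  also have "\<dots> = (\<integral>x. normal_density mu sd x * indicator S x \<partial>lborel)"
    unfolding gauss_def using assms by (subst integral_density) auto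
  finally show ?thesis .
qed

lemma normal_density_le_iff:
  assumes "sd > 0"
  shows "normal_density a sd x \<le> normal_density b sd x \<longleftrightarrow> \<bar>x - b\<bar> \<le> \<bar>x - a\<bar>"
proof -
  have "\<not> pi * sd\<^sup>2 < 0"
    by (simp add: not_less)
  then show ?thesis
    using assms by (simp add: normal_density_def divide_le_cancel abs_le_square_iff)
qed

lemma measure_gauss_disjoint_sum_le:
  assumes "sd > 0" "mu0 \<le> mu1" "C \<in> sets borel" "B \<in> sets borel" "C \<inter> B = {}"
  shows "measure (gauss mu0 sd) C + measure (gauss mu1 sd) B \<le>
    2 * Phi ((mu1 - mu0) / (2 * sd))"
proof -
  define m where "m = (mu0 + mu1) / 2"
  let ?f0 = "normal_density mu0 sd" and ?f1 = "normal_density mu1 sd"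
  have int: "integrable lborel (\<lambda>x. normal_density mu sd x * indicator S x)"
    if "S \<in> sets borel" for mu S
    using assms(1) that by (intro integrable_real_mult_indicator) auto
  have "measure (gauss mu0 sd) C + measure (gauss mu1 sd) B =
      (\<integral>x. ?f0 x * indicator C x + ?f1 x * indicator B x \<partial>lborel)"
    using assms int by (simp add: measure_gauss_eq_integral)
  also have "\<dots> \<le> (\<integral>x. ?f0 x * indicator {..<m} x + ?f1 x * indicator {m..} x \<partial>lborel)"
  proof (rule integral_mono)
    fix x
    have "?f1 x \<le> ?f0 x" if "x < m"
      using that assms by (simp add: normal_density_le_iff m_def)
    moreover have "?f0 x \<le> ?f1 x" if "x \<ge> m"
      using that assms by (simp add: normal_density_le_iff m_def)
    ultimately show "?f0 x * indicator C x + ?f1 x * indicator B x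
        \<le> ?f0 x * indicator {..<m} x + ?f1 x * indicator {m..} x"
      using assms(5) normal_density_nonneg[of mu0 sd x] normal_density_nonneg[of mu1 sd x]
      by (auto simp: indicator_def)
  qed (use assms int in auto)
  also have "\<dots> = measure (gauss mu0 sd) {..<m} + measure (gauss mu1 sd) {m..}"
    using assms int by (simp add: measure_gauss_eq_integral)
  also have "\<dots> = 2 * Phi ((mu1 - mu0) / (2 * sd))"
  proof -
    have "(m - mu1) / sd = - ((mu1 - mu0) / (2 * sd))"
      and "(m - mu0) / sd = (mu1 - mu0) / (2 * sd)"
      using assms by (simp_all add: m_def field_simps)
    then show ?thesis
      using assms by (simp add: measure_gauss_lessThan measure_gauss_atLeast Phi_minus)
  qed
  finally show ?thesis .
qed

definition thickening :: "real \<Rightarrow> 'a::metric_space set \<Rightarrow> 'a set" where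
  "thickening eps S = {x. \<exists>a\<in>S. dist x a \<le> eps}"

lemma thickening_eq_sums:
  fixes S :: "'a::real_normed_vector set"
  shows "thickening eps S = (\<Union>a\<in>S. \<Union>y\<in>cball 0 eps. {a + y})"
proof (intro set_eqI iffI)
  fix x assume "x \<in> thickening eps S"
  then obtain a where "a \<in> S" "dist x a \<le> eps"
    by (auto simp: thickening_def)
  then have "x - a \<in> cball 0 eps" "x = a + (x - a)"
    by (simp_all add: dist_norm norm_minus_commute)
  with \<open>a \<in> S\<close> show "x \<in> (\<Union>a\<in>S. \<Union>y\<in>cball 0 eps. {a + y})"
    by blast
next
  fix x assume "x \<in> (\<Union>a\<in>S. \<Union>y\<in>cball 0 eps. {a + y})"
  then obtain a y where "a \<in> S" "y \<in> cball 0 eps" "x = a + y"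
    by blast
  then show "x \<in> thickening eps S"
    by (auto simp: thickening_def dist_norm intro!: bexI[where x=a])
qed

lemma thickening_empty [simp]: "thickening eps {} = {}"
  by (simp add: thickening_def)

lemma subset_thickening: "eps \<ge> 0 \<Longrightarrow> S \<subseteq> thickening eps S"
  by (force simp: thickening_def)

lemma thickening_UNIV [simp]: "eps \<ge> 0 \<Longrightarrow> thickening eps UNIV = UNIV"
  using subset_thickening[of eps UNIV] by blast

lemma closed_thickening:
  fixes S :: "'a::{real_normed_vector, heine_borel} set"
  shows "closed S \<Longrightarrow> closed (thickening eps S)"
  unfolding thickening_eq_sums by (intro closed_compact_sums) auto

lemma open_thickening:
  fixes S :: "'a::real_normed_vector set"
  shows "open S \<Longrightarrow> open (thickening eps S)"
  unfolding thickening_eq_sums by (intro open_sums) auto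

lemma SUP_indicator_cball:
  assumes "eps \<ge> 0"
  shows "(SUP y\<in>cball x eps. indicator S y :: real) = indicator (thickening eps S) x"
proof (cases "x \<in> thickening eps S")
  case True
  then obtain a where "a \<in> S" "a \<in> cball x eps"
    by (auto simp: thickening_def dist_commute)
  then have "(SUP y\<in>cball x eps. indicator S y :: real) = 1"
    using assms by (intro antisym cSUP_least cSUP_upper2[where x=a] bdd_aboveI[where M=1])
      (auto simp: indicator_def)
  with True show ?thesis
    by simp
next
  case False
  then have "indicator S y = (0 :: real)" if "y \<in> cball x eps" for y
    using that by (auto simp: thickening_def dist_commute)
  with False assms show ?thesis
    by simp
qed

lemma adv_risk_eq_thickening:
  assumes "closed A" "eps \<ge> 0" "sd > 0"
  shows "adv_risk mu0 mu1 sd eps A =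
    (measure (gauss mu0 sd) (thickening eps A) +
     measure (gauss mu1 sd) (thickening eps (- A))) / 2"
proof -
  have "loss01 A y 0 = indicator A y" "loss01 A y 1 = indicator (- A) y" for y
    by (simp_all add: loss01_def indicator_def)
  then show ?thesis
    using assms by (simp add: adv_risk_def SUP_indicator_cball)
qed

lemma adv_risk_lower_bound:
  assumes "closed A" "sd > 0" "0 \<le> s" "s \<le> 2 * eps" "s \<le> mu1 - mu0"
  shows "1 - Phi ((mu1 - mu0 - s) / (2 * sd)) \<le> adv_risk mu0 mu1 sd eps A"
proof -
  define D where "D = thickening eps A"
  define E where "E = thickening eps (- A)"
  have [measurable]: "D \<in> sets borel" "E \<in> sets borel"
    using assms by (auto simp: D_def E_def closed_thickening open_thickening open_Compl)
  have [measurable]: "(\<lambda>x. x + s) -` (- E) \<in> sets borel"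
    by (rule measurable_sets_borel[where M=borel]) auto
  have shift: "x + s \<in> E" if "x \<notin> D" for x
  proof -
    have "x + s / 2 \<notin> A"
      using that assms by (auto simp: D_def thickening_def dist_real_def)
    then show ?thesis
      using assms
      by (auto simp: E_def thickening_def dist_real_def intro!: bexI[where x="x + s / 2"])
  qed
  have "measure (gauss mu0 sd) (- D) + measure (gauss mu1 sd) (- E) =
      measure (gauss mu0 sd) (- D) + measure (gauss (mu1 - s) sd) ((\<lambda>x. s + 1 * x) -` (- E))"
    using measure_gauss_affine_vimage[where a=1 and b=s and mu="mu1 - s" and S="- E"] assms
    by simp
  also have "\<dots> \<le> 2 * Phi ((mu1 - s - mu0) / (2 * sd))"
    using shift assms by (intro measure_gauss_disjoint_sum_le) (auto simp: add.commute)
  finally have "measure (gauss mu0 sd) (- D) + measure (gauss mu1 sd) (- E)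
      \<le> 2 * Phi ((mu1 - mu0 - s) / (2 * sd))"
    by (simp add: algebra_simps)
  moreover have "adv_risk mu0 mu1 sd eps A =
      (measure (gauss mu0 sd) D + measure (gauss mu1 sd) E) / 2"
    unfolding D_def E_def using assms by (intro adv_risk_eq_thickening) auto
  ultimately show ?thesis
    using assms by (simp add: measure_gauss_Compl)
qed

lemma thickening_atLeast:
  assumes "eps \<ge> 0"
  shows "thickening eps {m..} = {m - eps..}"
proof (intro set_eqI iffI)
  fix x assume "x \<in> {m - eps..}"
  then have "max x m \<in> {m..}" "dist x (max x m) \<le> eps"
    using assms by (auto simp: dist_real_def)
  then show "x \<in> thickening eps {m..}"
    unfolding thickening_def by blast
qed (auto simp: thickening_def dist_real_def)

lemma thickening_lessThan:
  assumes "eps \<ge> 0"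
  shows "thickening eps {..<m} = {..<m + eps}"
proof (intro set_eqI iffI)
  fix x assume "x \<in> {..<m + eps}"
  then have "(if x < m then x else x - eps) \<in> {..<m}"
    and "dist x (if x < m then x else x - eps) \<le> eps"
    using assms by (auto simp: dist_real_def)
  then show "x \<in> thickening eps {..<m}"
    unfolding thickening_def by blast
qed (auto simp: thickening_def dist_real_def)

lemma adv_risk_midpoint_threshold:
  assumes "sd > 0" "eps \<ge> 0"
  shows "adv_risk mu0 mu1 sd eps {(mu0 + mu1) / 2..} = Qfun (((mu1 - mu0) / 2 - eps) / sd)"
proof -
  define t where "t = ((mu1 - mu0) / 2 - eps) / sd"
  have "((mu0 + mu1) / 2 - eps - mu0) / sd = t" and "((mu0 + mu1) / 2 + eps - mu1) / sd = - t"
    using assms by (simp_all add: t_def field_simps)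
  then show ?thesis
    using assms
    by (simp add: adv_risk_eq_thickening thickening_atLeast thickening_lessThan
        measure_gauss_atLeast measure_gauss_lessThan Phi_minus Qfun_def flip: t_def)
qed

lemma adv_risk_empty:
  assumes "sd > 0" "eps \<ge> 0"
  shows "adv_risk mu0 mu1 sd eps {} = 1/2"
  using assms prob_space.prob_space[OF prob_space_gauss[OF assms(1)]]
  by (simp add: adv_risk_eq_thickening)

lemma opt_robust_risk_eqI:
  assumes "closed A\<^sub>0" "adv_risk mu0 mu1 sd eps A\<^sub>0 = r"
    and "\<And>A. closed A \<Longrightarrow> r \<le> adv_risk mu0 mu1 sd eps A"
  shows "opt_robust_risk mu0 mu1 sd eps = r"
  unfolding opt_robust_risk_def
proof (rule antisym)
  show "(INF A\<in>{A. closed A}. adv_risk mu0 mu1 sd eps A) \<le> r"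
    using assms by (intro cINF_lower2[where x=A\<^sub>0] bdd_belowI2[where m=r]) auto
  show "r \<le> (INF A\<in>{A. closed A}. adv_risk mu0 mu1 sd eps A)"
    using assms by (intro cINF_greatest) auto
qed

theorem theorem3:
  fixes mu0 mu1 sd eps :: real
  assumes "sd > 0" and "mu0 < mu1" and "eps \<ge> 0"
  shows "(eps \<ge> \<bar>mu0 - mu1\<bar> / 2 \<longrightarrow>
            opt_robust_risk mu0 mu1 sd eps = 1/2 \<and>
            (\<exists>A. (A = {} \<or> A = UNIV) \<and> adv_risk mu0 mu1 sd eps A = opt_robust_risk mu0 mu1 sd eps))
       \<and> (eps < \<bar>mu0 - mu1\<bar> / 2 \<longrightarrow>
            adv_risk mu0 mu1 sd eps {(mu0 + mu1) / 2..} = opt_robust_risk mu0 mu1 sd eps \<and>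
            opt_robust_risk mu0 mu1 sd eps = Qfun (((mu1 - mu0) / 2 - eps) / sd))"
proof (intro conjI impI)
  assume large: "\<bar>mu0 - mu1\<bar> / 2 \<le> eps"
  have "1/2 \<le> adv_risk mu0 mu1 sd eps A" if "closed A" for A
    using adv_risk_lower_bound[of A sd "mu1 - mu0" eps mu1 mu0, OF that assms(1)] large assms
    by (simp add: Phi_0)
  then have opt: "opt_robust_risk mu0 mu1 sd eps = 1/2"
    using assms by (intro opt_robust_risk_eqI[OF closed_empty adv_risk_empty])
  then show "opt_robust_risk mu0 mu1 sd eps = 1/2" .
  show "\<exists>A. (A = {} \<or> A = UNIV) \<and> adv_risk mu0 mu1 sd eps A = opt_robust_risk mu0 mu1 sd eps"
    using opt assms by (intro exI[where x="{}"]) (simp add: adv_risk_empty)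
next
  assume small: "eps < \<bar>mu0 - mu1\<bar> / 2"
  have "Qfun (((mu1 - mu0) / 2 - eps) / sd) \<le> adv_risk mu0 mu1 sd eps A" if "closed A" for A
  proof -
    have "(mu1 - mu0 - 2 * eps) / (2 * sd) = ((mu1 - mu0) / 2 - eps) / sd"
      using assms by (simp add: field_simps)
    then show ?thesis
      using adv_risk_lower_bound[of A sd "2 * eps" eps mu1 mu0, OF that assms(1)] small assms
      by (simp add: Qfun_def)
  qed
  then have "opt_robust_risk mu0 mu1 sd eps = Qfun (((mu1 - mu0) / 2 - eps) / sd)"
    using assms by (intro opt_robust_risk_eqI[OF closed_atLeast adv_risk_midpoint_threshold])
  then show "adv_risk mu0 mu1 sd eps {(mu0 + mu1) / 2..} = opt_robust_risk mu0 mu1 sd eps"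
    and "opt_robust_risk mu0 mu1 sd eps = Qfun (((mu1 - mu0) / 2 - eps) / sd)"
    using assms by (simp_all add: adv_risk_midpoint_threshold)
qed

end
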